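(* Let $(\bm \Pi, S)$ be a price system with $S\in\mathbb{R}_+^{(N+1)\times K}$. If the market model is complete, then it is a least-squares market, i.e. $S^+\bm\Pi\in\mathcal{Q}$, where $S^+$ is the Moore–Penrose pseudoinverse of $S$.
   Context: Single-period market with finite sample space $\Omega$, $K=|\Omega|$. A price system $(\bm\Pi,S)$: $\bm\Pi=(1,\Pi_2,\dots,\Pi_{N+1})^T\in\mathbb{R}_+^{N+1}$ are current prices and $S\in\mathbb{R}_+^{(N+1)\times K}$, with $S_{i\omega}$ the payoff of asset $i$ in outcome $\omega$; the first row of $S$ is all ones (safe asset), and the assets are non-redundant (no row of $S$ is a linear combination of the others). The market is arbitrage-free if there is no $\bm v\in\mathbb{R}^{N+1}$ with $\bm v^T\bm\Pi\le 0$, $S^T\bm v\ge 0$ and $(S^T\bm v)_j>0$ for some $j$. An arbitrage-free market model is complete if for every $\bm D\in\mathbb{R}_+^K$ there exists $\bm\xi\in\mathbb{R}^{N+1}$ with $\bm D=S^T\bm\xi$. $\mathcal{Q}:=\{\bm q\in\mathbb{R}^K: q_k>0\ \forall k,\ \sum_k q_k=1,\ S\bm q=\bm\Pi\}$ is the set of equivalent martingale measures. An arbitrage-free market model is a least-squares market if $S^+\bm\Pi\in\mathcal{Q}$. *)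

theory Defs
  imports "HOL-Analysis.Analysis"
begin

text \<open>Assets are indexed by a finite type 'n (with N+1 = CARD('n) elements), outcomes by a
finite type 'k (K = CARD('k)). The safe asset is the distinguished index i0.\<close>

definition price_system :: "'n::finite \<Rightarrow> real^'n \<Rightarrow> real^'k::finite^'n \<Rightarrow> bool" where
  "price_system i0 Pr S \<longleftrightarrow>
     Pr $ i0 = 1 \<and> (\<forall>i. 0 \<le> Pr $ i) \<and>
     (\<forall>i k. 0 \<le> S $ i $ k) \<and> (\<forall>k. S $ i0 $ k = 1) \<and>
     (\<forall>i. S $ i \<notin> span ((\<lambda>j. S $ j) ` (UNIV - {i})))"

definition arbitrage_free :: "real^'n::finite \<Rightarrow> real^'k::finite^'n \<Rightarrow> bool" where
  "arbitrage_free Pr S \<longleftrightarrow>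
     \<not> (\<exists>v :: real^'n. v \<bullet> Pr \<le> 0 \<and> (\<forall>j. 0 \<le> (transpose S *v v) $ j)
                        \<and> (\<exists>j. 0 < (transpose S *v v) $ j))"

definition complete_market :: "real^'n::finite \<Rightarrow> real^'k::finite^'n \<Rightarrow> bool" where
  "complete_market Pr S \<longleftrightarrow>
     arbitrage_free Pr S \<and>
     (\<forall>D :: real^'k. (\<forall>k. 0 \<le> D $ k) \<longrightarrow> (\<exists>\<xi> :: real^'n. D = transpose S *v \<xi>))"

definition EMM :: "real^'n::finite \<Rightarrow> real^'k::finite^'n \<Rightarrow> (real^'k) set" where
  "EMM Pr S = {q. (\<forall>k. 0 < q $ k) \<and> (\<Sum>k\<in>UNIV. q $ k) = 1 \<and> S *v q = Pr}"

definition pseudoinverse :: "real^'k::finite^'n::finite \<Rightarrow> real^'n^'k" where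
  "pseudoinverse A = (THE X. A ** X ** A = A \<and> X ** A ** X = X \<and>
                             transpose (A ** X) = A ** X \<and> transpose (X ** A) = X ** A)"

definition least_squares_market :: "real^'n::finite \<Rightarrow> real^'k::finite^'n \<Rightarrow> bool" where
  "least_squares_market Pr S \<longleftrightarrow> arbitrage_free Pr S \<and> pseudoinverse S *v Pr \<in> EMM Pr S"

end

theory Submission
  imports Defs
begin

text \<open>Completeness makes every payoff replicable, and non-redundancy makes the replicating
portfolio unique, so the payoff matrix \<open>S\<close> is invertible and \<open>S\<^sup>+ = S\<^sup>-\<^sup>1\<close>. Hence
\<open>q = S\<^sup>-\<^sup>1 \<Pi>\<close> solves \<open>S q = \<Pi>\<close>. Its \<open>k\<close>-th entry is the price of the Arrow security paying
1 in outcome \<open>k\<close> only, which is positive by absence of arbitrage, and the row of the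
safe asset shows that the entries of \<open>q\<close> sum to its price 1.\<close>

lemma surj_matrix_vector_mult_if_nonneg_in_range:
  fixes M :: "real^'m::finite^'k::finite"
  assumes "\<And>D. (\<forall>k. 0 \<le> D $ k) \<Longrightarrow> \<exists>x. D = M *v x"
  shows "surj ((*v) M)"
proof -
  have "\<exists>x. y = M *v x" for y
  proof -
    obtain a where a: "(\<chi> k. max (y $ k) 0) = M *v a"
      using assms[of "\<chi> k. max (y $ k) 0"] by auto
    obtain b where b: "(\<chi> k. max (- y $ k) 0) = M *v b"
      using assms[of "\<chi> k. max (- y $ k) 0"] by auto
    have "y = (\<chi> k. max (y $ k) 0) - (\<chi> k. max (- y $ k) 0)"
      by (simp add: vec_eq_iff max_def)
    also have "\<dots> = M *v (a - b)"
      using a b by (simp add: matrix_vector_mult_diff_distrib)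
    finally show ?thesis by blast
  qed
  then show ?thesis by (auto simp: surj_def)
qed

lemma right_invertible_if_rows_not_in_span:
  fixes A :: "real^'m::finite^'n::finite"
  assumes "\<And>i. A $ i \<notin> span ((\<lambda>j. A $ j) ` (UNIV - {i}))"
  shows "\<exists>B. A ** B = mat 1"
  unfolding matrix_right_invertible_independent_rows
proof (intro allI impI)
  fix c i
  assume "(\<Sum>j\<in>UNIV. c j *s row j A) = 0"
  then have "c i *\<^sub>R A $ i + (\<Sum>j\<in>UNIV - {i}. c j *\<^sub>R A $ j) = 0"
    by (simp add: row_def scalar_mult_eq_scaleR sum.remove)
  then have "c i *\<^sub>R A $ i = - (\<Sum>j\<in>UNIV - {i}. c j *\<^sub>R A $ j)"
    by (simp add: eq_neg_iff_add_eq_0)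
  also have "\<dots> \<in> span ((\<lambda>j. A $ j) ` (UNIV - {i}))"
    by (intro span_neg span_sum span_scale span_base) auto
  finally have in_span: "c i *\<^sub>R A $ i \<in> span ((\<lambda>j. A $ j) ` (UNIV - {i}))" .
  show "c i = 0"
  proof (rule ccontr)
    assume "c i \<noteq> 0"
    then have "A $ i = inverse (c i) *\<^sub>R (c i *\<^sub>R A $ i)" by simp
    with in_span assms[of i] show False by (metis span_scale)
  qed
qed

lemma left_inverse_eq_right_inverse:
  fixes A :: "'a::semiring_1^'n::finite^'m::finite"
  assumes "B ** A = mat 1" and "A ** C = mat 1"
  shows "B = C"
  by (metis assms matrix_mul_assoc matrix_mul_lid matrix_mul_rid)

lemma pseudoinverse_eq_inverse:
  fixes A :: "real^'k::finite^'n::finite"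
  assumes AX: "A ** X = mat 1" and XA: "X ** A = mat 1"
  shows "pseudoinverse A = X"
  unfolding pseudoinverse_def
proof (rule the_equality)
  fix Y
  assume "A ** Y ** A = A \<and> Y ** A ** Y = Y \<and>
          transpose (A ** Y) = A ** Y \<and> transpose (Y ** A) = Y ** A"
  then have AYA: "A ** Y ** A = A" by blast
  have "Y = (X ** A) ** Y ** (A ** X)"
    using AX XA by simp
  also have "\<dots> = X ** (A ** Y ** A) ** X"
    by (simp add: matrix_mul_assoc)
  also have "\<dots> = X"
    using AYA XA by simp
  finally show "Y = X" .
qed (use AX XA in \<open>simp add: transpose_mat\<close>)

lemma invertible_if_complete_market:
  fixes S :: "real^'k::finite^'n::finite"
  assumes "price_system i0 Pr S" and "complete_market Pr S"
  obtains X where "S ** X = mat 1" and "X ** S = mat 1"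
proof -
  obtain X where SX: "S ** X = mat 1"
    using assms(1) right_invertible_if_rows_not_in_span unfolding price_system_def by blast
  have "surj ((*v) (transpose S))"
    using assms(2) surj_matrix_vector_mult_if_nonneg_in_range
    unfolding complete_market_def by blast
  then obtain C where "transpose S ** C = mat 1"
    using matrix_right_invertible_surjective by blast
  then have "transpose C ** S = mat 1"
    by (metis matrix_transpose_mul transpose_mat transpose_transpose)
  with SX have "X ** S = mat 1"
    using left_inverse_eq_right_inverse by metis
  with SX show thesis by (rule that)
qed

lemma state_price_pos_if_arrow_security_replicable:
  fixes S :: "real^'k::finite^'n::finite"
  assumes "arbitrage_free Pr S" and "S *v q = Pr"
    and arrow: "transpose S *v v = axis k 1"
  shows "0 < q $ k"
proof -
  have "v \<bullet> Pr = (transpose S *v v) \<bullet> q"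
    using assms(2) by (simp add: dot_lmul_matrix)
  also have "\<dots> = q $ k"
    using arrow by (simp add: inner_axis')
  finally have "v \<bullet> Pr = q $ k" .
  moreover have "(\<forall>j. 0 \<le> (transpose S *v v) $ j) \<and> (\<exists>j. 0 < (transpose S *v v) $ j)"
    using arrow by (auto simp: axis_def intro!: exI[of _ k])
  then have "\<not> v \<bullet> Pr \<le> 0"
    using assms(1) unfolding arbitrage_free_def by blast
  ultimately show ?thesis by simp
qed

lemma matrix_vector_mult_safe_asset:
  assumes "\<And>k. S $ i0 $ k = 1"
  shows "(S *v q) $ i0 = (\<Sum>k\<in>UNIV. q $ k)"
  using assms by (simp add: matrix_vector_mult_def)

theorem mainTheorem4:
  fixes i0 :: "'n::finite" and Pr :: "real^'n" and S :: "real^'k::finite^'n"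
  assumes "price_system i0 Pr S"
    and "complete_market Pr S"
  shows "least_squares_market Pr S"
proof -
  obtain X where SX: "S ** X = mat 1" and XS: "X ** S = mat 1"
    using invertible_if_complete_market[OF assms] .
  have arbitrage_free: "arbitrage_free Pr S"
    using assms(2) unfolding complete_market_def by blast
  define q where "q = X *v Pr"
  have Sq: "S *v q = Pr"
    using SX by (simp add: q_def matrix_vector_mul_assoc)
  have "(\<Sum>k\<in>UNIV. q $ k) = 1"
    using assms(1) Sq matrix_vector_mult_safe_asset[of S i0 q]
    unfolding price_system_def by simp
  moreover have "0 < q $ k" for k
  proof (rule state_price_pos_if_arrow_security_replicable[OF arbitrage_free Sq])
    have "transpose S *v (transpose X *v axis k 1) = transpose (X ** S) *v axis k 1"
      by (simp only: matrix_vector_mul_assoc matrix_transpose_mul)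
    then show "transpose S *v (transpose X *v axis k 1) = axis k 1"
      using XS by (simp add: transpose_mat)
  qed
  ultimately show ?thesis
    using arbitrage_free Sq pseudoinverse_eq_inverse[OF SX XS]
    unfolding least_squares_market_def EMM_def q_def by auto
qed

end
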